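(* Let $x^k\in\mathbb{R}^n$ and $0<\alpha\le 1/L$, and suppose the gradient balance condition $\|\omega(x^k)\|\le\|\psi(x^k)\|$ holds. Then the subspace ISTA step $x^{k+1}=x^k-\alpha\,\psi(x^k)$ satisfies $$F(x^{k+1})-F(x^* )\le\bigl(1-\tfrac12\lambda\alpha\bigr)\bigl(F(x^k)-F(x^* )\bigr).$$
   Context: $A\in\mathbb{R}^{n\times n}$ is symmetric positive definite, with smallest eigenvalue $\lambda>0$ and largest eigenvalue $L$. Further, $b\in\mathbb{R}^n$ and $\tau\ge 0$. Define $f(x)=\tfrac12 x^TAx-b^Tx$, $g(x)=Ax-b$, and $F(x)=f(x)+\tau\|x\|_1$. Let $x^*$ be the unique minimizer of $F$. Use the convention $\mathrm{sgn}(0)=0$; $\|\cdot\|$ is the Euclidean norm. For $\alpha>0$, $i=1,\dots,n$ and $g=g(x)$: - $\omega(x)_i=0$ if $x_i\ne0$; $\omega(x)_i=0$ if $x_i=0$ and $|g_i|\le\tau$; $\omega(x)_i=g_i-\tau\,\mathrm{sgn}(g_i)$ if $x_i=0$ and $|g_i|>\tau$. - $\psi(x)_i=\frac1\alpha\bigl(x_i-\max\{|x_i-\alpha g_i|-\alpha\tau,0\}\,\mathrm{sgn}(x_i-\alpha g_i)\bigr)$ if $x_i\ne0$, and $\psi(x)_i=0$ if $x_i=0$. *)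

theory Defs
  imports "HOL-Analysis.Analysis"
begin

definition eigenvalues_of :: "real^'n^'n \<Rightarrow> real set" where
  "eigenvalues_of A = {\<mu>. \<exists>v. v \<noteq> 0 \<and> A *v v = \<mu> *\<^sub>R v}"

definition sym_posdef :: "real^'n^'n \<Rightarrow> bool" where
  "sym_posdef A \<longleftrightarrow> transpose A = A \<and> (\<forall>x. x \<noteq> 0 \<longrightarrow> x \<bullet> (A *v x) > 0)"

definition fq :: "real^'n^'n \<Rightarrow> real^'n \<Rightarrow> real^'n \<Rightarrow> real" where
  "fq A b x = (1/2) * (x \<bullet> (A *v x)) - b \<bullet> x"

definition grad :: "real^'n^'n \<Rightarrow> real^'n \<Rightarrow> real^'n \<Rightarrow> real^'n" where
  "grad A b x = A *v x - b"

definition l1norm :: "real^'n \<Rightarrow> real" where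
  "l1norm x = (\<Sum>i\<in>UNIV. \<bar>x $ i\<bar>)"

definition Fobj :: "real^'n^'n \<Rightarrow> real^'n \<Rightarrow> real \<Rightarrow> real^'n \<Rightarrow> real" where
  "Fobj A b \<tau> x = fq A b x + \<tau> * l1norm x"

definition omega :: "real^'n^'n \<Rightarrow> real^'n \<Rightarrow> real \<Rightarrow> real^'n \<Rightarrow> real^'n" where
  "omega A b \<tau> x = (\<chi> i. let g = grad A b x $ i in
      if x $ i \<noteq> 0 then 0
      else if \<bar>g\<bar> \<le> \<tau> then 0
      else g - \<tau> * sgn g)"

definition psi :: "real^'n^'n \<Rightarrow> real^'n \<Rightarrow> real \<Rightarrow> real \<Rightarrow> real^'n \<Rightarrow> real^'n" where
  "psi A b \<tau> \<alpha> x = (\<chi> i. let g = grad A b x $ i in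
      if x $ i \<noteq> 0 then
        (1/\<alpha>) * (x $ i - max (\<bar>x $ i - \<alpha> * g\<bar> - \<alpha> * \<tau>) 0 * sgn (x $ i - \<alpha> * g))
      else 0)"

end

theory Submission
  imports Defs
begin

text \<open>Write \<open>x\<^sup>+ = x - \<alpha>\<psi>\<close>. Coordinatewise, \<open>x\<^sup>+\<close> is a soft-thresholding
  (proximal) step on the support of \<open>x\<close> and stays at \<open>0\<close> off it, where \<open>\<omega>\<close> measures the
  violation of optimality. Combining the descent lemma for \<open>f\<close> (using \<open>\<alpha>L \<le> 1\<close>), strong convexity
  of \<open>f\<close> with modulus \<open>\<lambda>\<close> and the prox inequality gives, for every \<open>y\<close>,
  \<open>F(x\<^sup>+) \<le> F(y) + \<parallel>\<psi>+\<omega>\<parallel> \<parallel>x-y\<parallel> - \<alpha>/2 \<parallel>\<psi>\<parallel>\<^sup>2 - \<lambda>/2 \<parallel>x-y\<parallel>\<^sup>2\<close>.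
  Since \<open>\<psi>\<close> and \<open>\<omega>\<close> have disjoint supports, the balance condition yields
  \<open>\<parallel>\<psi>+\<omega>\<parallel>\<^sup>2 \<le> 2\<parallel>\<psi>\<parallel>\<^sup>2\<close>. Taking \<open>y = x\<close> gives a decrease of \<open>\<alpha>/2 \<parallel>\<psi>\<parallel>\<^sup>2\<close>; taking \<open>y = x\<^sup>*\<close> and
  maximising over \<open>\<parallel>x-x\<^sup>*\<parallel>\<close> gives \<open>F(x\<^sup>+) - F(x\<^sup>*) \<le> \<parallel>\<psi>\<parallel>\<^sup>2/\<lambda> - \<alpha>/2 \<parallel>\<psi>\<parallel>\<^sup>2\<close>. According as
  \<open>\<parallel>\<psi>\<parallel>\<^sup>2\<close> is above or below \<open>\<lambda>(F(x) - F(x\<^sup>*))\<close>, one of the two bounds yields the rate.\<close>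

lemma inner_sym_matrix_commute:
  fixes A :: "real^'n^'n"
  assumes "transpose A = A"
  shows "x \<bullet> (A *v y) = y \<bullet> (A *v x)"
proof -
  have "x \<bullet> (A *v y) = (x v* A) \<bullet> y" by (simp add: dot_lmul_matrix)
  also have "x v* A = transpose A *v x" by simp
  also have "\<dots> = A *v x" using assms by simp
  finally show ?thesis by (simp add: inner_commute)
qed

section \<open>Rayleigh quotient bounds\<close>

lemma rayleigh_maximizer_is_eigenvector:
  fixes A :: "real^'n^'n"
  assumes symA: "transpose A = A"
    and bound: "\<And>x. x \<bullet> (A *v x) \<le> M * (x \<bullet> x)"
    and attained: "v \<bullet> (A *v v) = M * (v \<bullet> v)"
  shows "A *v v = M *\<^sub>R v"
proof -
  define h where "h x = M * (x \<bullet> x) - x \<bullet> (A *v x)" for x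
  have h_nonneg: "h x \<ge> 0" for x using bound[of x] by (simp add: h_def)
  define w where "w = M *\<^sub>R v - A *v v"
  have expand: "h (v + t *\<^sub>R w) = 2 * t * (w \<bullet> w) + t\<^sup>2 * h w" for t
  proof -
    have "w \<bullet> (A *v v) = v \<bullet> (A *v w)" by (rule inner_sym_matrix_commute[OF symA])
    then show ?thesis
      unfolding h_def w_def using attained inner_commute[of "A *v v" v]
      by (simp add: algebra_simps inner_add_left inner_add_right inner_diff_left inner_diff_right
           matrix_vector_right_distrib matrix_vector_mult_scaleR power2_eq_square)
  qed
  have "w = 0"
  proof (rule ccontr)
    assume "w \<noteq> 0"
    then have ww: "w \<bullet> w > 0" by simp
    \<comment> \<open>a small step from \<open>v\<close> against \<open>w\<close> makes \<open>h\<close> negative\<close>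
    define t where "t = - (w \<bullet> w) / (h w + 1)"
    have t_neg: "t < 0" using ww h_nonneg[of w] by (simp add: t_def divide_neg_pos)
    have "t * h w > - (w \<bullet> w)" using ww h_nonneg[of w] by (simp add: t_def field_simps)
    then have "2 * (w \<bullet> w) + t * h w > 0" using ww by linarith
    then have "t * (2 * (w \<bullet> w) + t * h w) < 0" using ww t_neg by (simp add: mult_neg_pos)
    then have "h (v + t *\<^sub>R w) < 0" by (simp add: expand algebra_simps power2_eq_square)
    then show False using h_nonneg by (metis not_le)
  qed
  then show ?thesis by (simp add: w_def)
qed

lemma sym_matrix_max_eigenvalue_bound:
  fixes A :: "real^'n^'n"
  assumes symA: "transpose A = A"
  shows "\<exists>\<mu>\<in>eigenvalues_of A. \<forall>x. x \<bullet> (A *v x) \<le> \<mu> * (x \<bullet> x)"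
proof -
  define q where "q x = x \<bullet> (A *v x)" for x :: "real^'n"
  have "continuous_on (sphere 0 1) q"
    unfolding q_def by (intro continuous_intros linear_continuous_on matrix_vector_mul_linear)
  moreover have "sphere (0::real^'n) 1 \<noteq> {}"
    using norm_axis_1[of undefined] by (metis mem_sphere_0 empty_iff)
  ultimately obtain v where v: "v \<in> sphere 0 1" and v_max: "\<And>x. x \<in> sphere 0 1 \<Longrightarrow> q x \<le> q v"
    using continuous_attains_sup[OF compact_sphere] by blast
  have bound: "q x \<le> q v * (x \<bullet> x)" for x
  proof (cases "x = 0")
    case True
    then show ?thesis by (simp add: q_def)
  next
    case False
    have "q ((1 / norm x) *\<^sub>R x) \<le> q v" using False by (simp add: v_max)
    moreover have "q ((1 / norm x) *\<^sub>R x) = q x / (norm x)\<^sup>2"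
      by (simp add: q_def matrix_vector_mult_scaleR power2_eq_square)
    ultimately show ?thesis
      using False by (simp add: dot_square_norm divide_le_eq mult.commute)
  qed
  have "v \<bullet> v = 1" using v by (simp add: dot_square_norm)
  then have "A *v v = q v *\<^sub>R v"
    using bound by (intro rayleigh_maximizer_is_eigenvector[OF symA]) (auto simp: q_def)
  moreover have "v \<noteq> 0" using v by auto
  ultimately have "q v \<in> eigenvalues_of A" by (auto simp: eigenvalues_of_def)
  with bound show ?thesis unfolding q_def by blast
qed

lemma sym_matrix_min_eigenvalue_bound:
  fixes A :: "real^'n^'n"
  assumes symA: "transpose A = A"
  shows "\<exists>\<mu>\<in>eigenvalues_of A. \<forall>x. \<mu> * (x \<bullet> x) \<le> x \<bullet> (A *v x)"
proof -
  have neg: "(-A) *v x = - (A *v x)" for x :: "real^'n"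
    by (simp add: matrix_vector_mult_def vec_eq_iff sum_negf)
  have "transpose (-A) = -A"
    using symA by (simp add: vec_eq_iff transpose_def)
  then obtain \<mu> where "\<mu> \<in> eigenvalues_of (-A)" and bound: "\<forall>x. x \<bullet> ((-A) *v x) \<le> \<mu> * (x \<bullet> x)"
    using sym_matrix_max_eigenvalue_bound by blast
  then obtain v where "v \<noteq> 0" "(-A) *v v = \<mu> *\<^sub>R v" by (auto simp: eigenvalues_of_def)
  then have "A *v v = (-\<mu>) *\<^sub>R v" "v \<noteq> 0" by (metis neg minus_minus scaleR_minus_left)+
  then have "-\<mu> \<in> eigenvalues_of A" by (auto simp: eigenvalues_of_def)
  moreover have "(-\<mu>) * (x \<bullet> x) \<le> x \<bullet> (A *v x)" for x
    using bound[rule_format, of x] by (simp add: neg inner_minus_right)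
  ultimately show ?thesis by blast
qed

lemma quadratic_form_le_max_eigenvalue:
  fixes A :: "real^'n^'n"
  assumes "transpose A = A" and "\<forall>\<mu>\<in>eigenvalues_of A. \<mu> \<le> L"
  shows "x \<bullet> (A *v x) \<le> L * (x \<bullet> x)"
proof -
  obtain \<mu> where "\<mu> \<in> eigenvalues_of A" "x \<bullet> (A *v x) \<le> \<mu> * (x \<bullet> x)"
    using sym_matrix_max_eigenvalue_bound[OF assms(1)] by blast
  moreover have "\<mu> * (x \<bullet> x) \<le> L * (x \<bullet> x)"
    using calculation(1) assms(2) by (simp add: mult_right_mono)
  ultimately show ?thesis by linarith
qed

lemma quadratic_form_ge_min_eigenvalue:
  fixes A :: "real^'n^'n"
  assumes "transpose A = A" and "\<forall>\<mu>\<in>eigenvalues_of A. lam \<le> \<mu>"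
  shows "lam * (x \<bullet> x) \<le> x \<bullet> (A *v x)"
proof -
  obtain \<mu> where "\<mu> \<in> eigenvalues_of A" "\<mu> * (x \<bullet> x) \<le> x \<bullet> (A *v x)"
    using sym_matrix_min_eigenvalue_bound[OF assms(1)] by blast
  moreover have "lam * (x \<bullet> x) \<le> \<mu> * (x \<bullet> x)"
    using calculation(1) assms(2) by (simp add: mult_right_mono)
  ultimately show ?thesis by linarith
qed

lemma fq_add:
  fixes A :: "real^'n^'n"
  assumes symA: "transpose A = A"
  shows "fq A b (x + d) = fq A b x + grad A b x \<bullet> d + (1/2) * (d \<bullet> (A *v d))"
proof -
  have "x \<bullet> (A *v d) = d \<bullet> (A *v x)" by (rule inner_sym_matrix_commute[OF symA])
  then show ?thesis unfolding fq_def grad_def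
    using inner_commute[of d "A *v x"]
    by (simp add: algebra_simps inner_add_left inner_add_right inner_diff_left)
qed

lemma fq_descent:
  fixes A :: "real^'n^'n"
  assumes "transpose A = A" and "\<forall>\<mu>\<in>eigenvalues_of A. \<mu> \<le> L"
  shows "fq A b (x + d) \<le> fq A b x + grad A b x \<bullet> d + L / 2 * (norm d)\<^sup>2"
proof -
  have "d \<bullet> (A *v d) \<le> L * (norm d)\<^sup>2"
    using quadratic_form_le_max_eigenvalue[OF assms, of d] by (simp add: power2_norm_eq_inner)
  then show ?thesis using fq_add[OF assms(1), of b x d] by linarith
qed

lemma fq_strongly_convex:
  fixes A :: "real^'n^'n"
  assumes "transpose A = A" and "\<forall>\<mu>\<in>eigenvalues_of A. lam \<le> \<mu>"
  shows "fq A b x + grad A b x \<bullet> (y - x) + lam / 2 * (norm (x - y))\<^sup>2 \<le> fq A b y"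
proof -
  have "lam * (norm (x - y))\<^sup>2 \<le> (y - x) \<bullet> (A *v (y - x))"
    using quadratic_form_ge_min_eigenvalue[OF assms, of "y - x"]
    by (simp add: power2_norm_eq_inner norm_minus_commute[of x y])
  then show ?thesis using fq_add[OF assms(1), of b x "y - x"] by simp
qed

section \<open>One step of subspace ISTA\<close>

definition soft_threshold :: "real \<Rightarrow> real \<Rightarrow> real" where
  "soft_threshold t z = max (\<bar>z\<bar> - t) 0 * sgn z"

lemma soft_threshold_prox_ineq:
  assumes t: "t \<ge> 0"
  shows "t * \<bar>soft_threshold t z\<bar> + (z - soft_threshold t z) * (y - soft_threshold t z) \<le> t * \<bar>y\<bar>"
proof -
  consider "\<bar>z\<bar> \<le> t" | "z > t" | "z < - t" by linarith
  then show ?thesis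
  proof cases
    case 1
    have "z * y \<le> \<bar>z\<bar> * \<bar>y\<bar>" using abs_ge_self[of "z * y"] by (simp add: abs_mult)
    also have "\<dots> \<le> t * \<bar>y\<bar>" using 1 by (simp add: mult_right_mono)
    finally show ?thesis using 1 by (simp add: soft_threshold_def)
  next
    case 2
    then have p: "soft_threshold t z = z - t" using t by (simp add: soft_threshold_def)
    have "t * \<bar>soft_threshold t z\<bar> + (z - soft_threshold t z) * (y - soft_threshold t z) = t * y"
      unfolding p using 2 by (simp add: algebra_simps)
    also have "\<dots> \<le> t * \<bar>y\<bar>" using t by (simp add: mult_left_mono)
    finally show ?thesis .
  next
    case 3
    then have p: "soft_threshold t z = z + t" using t by (simp add: soft_threshold_def)
    have "t * \<bar>soft_threshold t z\<bar> + (z - soft_threshold t z) * (y - soft_threshold t z) = t * (- y)"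
      unfolding p using 3 by (simp add: algebra_simps)
    also have "\<dots> \<le> t * \<bar>y\<bar>" using t by (intro mult_left_mono) simp_all
    finally show ?thesis .
  qed
qed

lemma psi_nth:
  "psi A b \<tau> \<alpha> x $ i =
    (if x $ i \<noteq> 0 then (x $ i - soft_threshold (\<alpha> * \<tau>) (x $ i - \<alpha> * grad A b x $ i)) / \<alpha> else 0)"
  by (simp add: psi_def soft_threshold_def Let_def)

lemma omega_nth:
  "omega A b \<tau> x $ i =
    (if x $ i \<noteq> 0 then 0 else if \<bar>grad A b x $ i\<bar> \<le> \<tau> then 0 else grad A b x $ i - \<tau> * sgn (grad A b x $ i))"
  by (simp add: omega_def Let_def)

lemma orthogonal_psi_omega: "orthogonal (psi A b \<tau> \<alpha> x) (omega A b \<tau> x)"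
  by (auto simp: orthogonal_def inner_vec_def psi_nth omega_nth intro!: sum.neutral)

lemma ista_coordinate_ineq:
  fixes x g y \<tau> \<alpha> :: real
  assumes tau: "\<tau> \<ge> 0" and alpha: "\<alpha> > 0"
  defines "ps \<equiv> if x \<noteq> 0 then (x - soft_threshold (\<alpha> * \<tau>) (x - \<alpha> * g)) / \<alpha> else 0"
    and "om \<equiv> if x \<noteq> 0 then 0 else if \<bar>g\<bar> \<le> \<tau> then 0 else g - \<tau> * sgn g"
  shows "g * (x - \<alpha> * ps - y) + \<tau> * \<bar>x - \<alpha> * ps\<bar>
           \<le> \<tau> * \<bar>y\<bar> + \<bar>ps + om\<bar> * \<bar>x - y\<bar> - \<alpha> * ps\<^sup>2"
proof (cases "x = 0")
  case True
  have "\<bar>g\<bar> \<le> \<tau> + \<bar>om\<bar>"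
  proof (cases "\<bar>g\<bar> \<le> \<tau>")
    case False
    then have "om = g - \<tau> * sgn g" using True by (simp add: om_def)
    then show ?thesis using False tau by (cases "g > 0") (simp_all add: sgn_if)
  qed simp
  then have "\<bar>g\<bar> * \<bar>y\<bar> \<le> \<tau> * \<bar>y\<bar> + \<bar>om\<bar> * \<bar>y\<bar>"
    using mult_right_mono[of "\<bar>g\<bar>" "\<tau> + \<bar>om\<bar>" "\<bar>y\<bar>"] by (simp add: distrib_right)
  moreover have "- (g * y) \<le> \<bar>g\<bar> * \<bar>y\<bar>" using abs_ge_minus_self[of "g * y"] by (simp add: abs_mult)
  moreover have "ps = 0" using True by (simp add: ps_def)
  ultimately show ?thesis using True by simp
next
  case False
  define p where "p = soft_threshold (\<alpha> * \<tau>) (x - \<alpha> * g)"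
  have ps: "ps = (x - p) / \<alpha>" and om: "om = 0" using False by (simp_all add: ps_def om_def p_def)
  have step: "x - \<alpha> * ps = p" using alpha by (simp add: ps)
  have "\<alpha> * \<tau> * \<bar>p\<bar> + (x - \<alpha> * g - p) * (y - p) \<le> \<alpha> * \<tau> * \<bar>y\<bar>"
    unfolding p_def using tau alpha by (intro soft_threshold_prox_ineq) simp
  then have "\<alpha> * (g * (p - y) + \<tau> * \<bar>p\<bar>) \<le> \<alpha> * (\<tau> * \<bar>y\<bar>) + (x - p) * (x - y) - (x - p)\<^sup>2"
    by (simp add: algebra_simps power2_eq_square)
  moreover have "(x - p) * (x - y) \<le> \<bar>x - p\<bar> * \<bar>x - y\<bar>"
    using abs_ge_self[of "(x - p) * (x - y)"] by (simp add: abs_mult)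
  moreover have "\<alpha> * (\<tau> * \<bar>y\<bar> + \<bar>ps\<bar> * \<bar>x - y\<bar> - \<alpha> * ps\<^sup>2)
      = \<alpha> * (\<tau> * \<bar>y\<bar>) + \<bar>x - p\<bar> * \<bar>x - y\<bar> - (x - p)\<^sup>2"
    using alpha by (simp add: ps abs_divide power2_eq_square field_simps)
  ultimately have "\<alpha> * (g * (p - y) + \<tau> * \<bar>p\<bar>) \<le> \<alpha> * (\<tau> * \<bar>y\<bar> + \<bar>ps\<bar> * \<bar>x - y\<bar> - \<alpha> * ps\<^sup>2)"
    by linarith
  then show ?thesis using alpha by (simp add: step om)
qed

lemma sum_abs_mult_le_norm_mult:
  fixes u v :: "real^'n"
  shows "(\<Sum>i\<in>UNIV. \<bar>u $ i\<bar> * \<bar>v $ i\<bar>) \<le> norm u * norm v"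
  using L2_set_mult_ineq[where f = "\<lambda>i. u $ i" and g = "\<lambda>i. v $ i" and A = UNIV] by (simp add: norm_vec_def L2_set_def)

lemma subspace_ista_linearization:
  fixes A :: "real^'n^'n" and b x :: "real^'n"
  assumes "\<tau> \<ge> 0" and "\<alpha> > 0"
  defines "p \<equiv> psi A b \<tau> \<alpha> x" and "w \<equiv> omega A b \<tau> x"
  shows "grad A b x \<bullet> (x - \<alpha> *\<^sub>R p - y) + \<tau> * l1norm (x - \<alpha> *\<^sub>R p)
           \<le> \<tau> * l1norm y + norm (p + w) * norm (x - y) - \<alpha> * (norm p)\<^sup>2"
proof -
  let ?g = "grad A b x"
  have norm_sq: "(norm p)\<^sup>2 = (\<Sum>i\<in>UNIV. (p $ i)\<^sup>2)"
    unfolding power2_norm_eq_inner by (simp add: inner_vec_def power2_eq_square)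
  have "(\<Sum>i\<in>UNIV. ?g $ i * (x $ i - \<alpha> * p $ i - y $ i) + \<tau> * \<bar>x $ i - \<alpha> * p $ i\<bar>)
      \<le> (\<Sum>i\<in>UNIV. \<tau> * \<bar>y $ i\<bar> + \<bar>(p + w) $ i\<bar> * \<bar>(x - y) $ i\<bar> - \<alpha> * (p $ i)\<^sup>2)"
    unfolding p_def w_def psi_nth omega_nth vector_add_component vector_minus_component
    by (intro sum_mono ista_coordinate_ineq assms)
  also have "\<dots> = \<tau> * l1norm y + (\<Sum>i\<in>UNIV. \<bar>(p + w) $ i\<bar> * \<bar>(x - y) $ i\<bar>) - \<alpha> * (norm p)\<^sup>2"
    using norm_sq by (simp add: l1norm_def sum.distrib sum_subtractf sum_distrib_left)
  also have "\<dots> \<le> \<tau> * l1norm y + norm (p + w) * norm (x - y) - \<alpha> * (norm p)\<^sup>2"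
    using sum_abs_mult_le_norm_mult[of "p + w" "x - y"] by linarith
  finally show ?thesis
    by (simp add: inner_vec_def l1norm_def sum.distrib sum_distrib_left)
qed

lemma subspace_ista_step_ineq:
  fixes A :: "real^'n^'n" and b x y :: "real^'n"
  assumes symA: "transpose A = A"
    and lam: "\<forall>\<mu>\<in>eigenvalues_of A. lam \<le> \<mu>" and L: "\<forall>\<mu>\<in>eigenvalues_of A. \<mu> \<le> L"
    and tau: "\<tau> \<ge> 0" and alpha: "\<alpha> > 0" "L * \<alpha> \<le> 1"
  defines "p \<equiv> psi A b \<tau> \<alpha> x" and "w \<equiv> omega A b \<tau> x"
  shows "Fobj A b \<tau> (x - \<alpha> *\<^sub>R p)
           \<le> Fobj A b \<tau> y + norm (p + w) * norm (x - y) - \<alpha> / 2 * (norm p)\<^sup>2 - lam / 2 * (norm (x - y))\<^sup>2"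
proof -
  let ?g = "grad A b x"
  have "L / 2 * (norm (\<alpha> *\<^sub>R p))\<^sup>2 = (L * \<alpha>) * (\<alpha> / 2 * (norm p)\<^sup>2)"
    by (simp add: power2_eq_square)
  also have "\<dots> \<le> \<alpha> / 2 * (norm p)\<^sup>2"
    using mult_right_mono[OF alpha(2), of "\<alpha> / 2 * (norm p)\<^sup>2"] alpha(1) by simp
  finally have "fq A b (x - \<alpha> *\<^sub>R p) \<le> fq A b x + ?g \<bullet> (- \<alpha> *\<^sub>R p) + \<alpha> / 2 * (norm p)\<^sup>2"
    using fq_descent[OF symA L, of b x "- \<alpha> *\<^sub>R p"] by simp
  moreover have "fq A b x + ?g \<bullet> (y - x) + lam / 2 * (norm (x - y))\<^sup>2 \<le> fq A b y"
    by (rule fq_strongly_convex[OF symA lam])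
  moreover have "?g \<bullet> (- \<alpha> *\<^sub>R p) = ?g \<bullet> (x - \<alpha> *\<^sub>R p - y) + ?g \<bullet> (y - x)"
    by (simp add: inner_diff_right)
  ultimately show ?thesis
    using subspace_ista_linearization[OF tau alpha(1), of A b x y] unfolding Fobj_def p_def w_def
    by linarith
qed

lemma mult_sub_half_square_le:
  fixes s r lam :: real
  assumes "lam > 0"
  shows "s * r - lam / 2 * r\<^sup>2 \<le> s\<^sup>2 / (2 * lam)"
proof -
  have "0 \<le> (s - lam * r)\<^sup>2" by simp
  then show ?thesis using assms by (simp add: field_simps power2_eq_square)
qed

lemma linear_rate_of_two_bounds:
  fixes D E P lam \<alpha> :: real
  assumes "D \<ge> 0" and "lam > 0" and "\<alpha> \<ge> 0" and "lam * \<alpha> \<le> 1"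
    and "E \<le> D - \<alpha> / 2 * P" and "E \<le> P / lam - \<alpha> / 2 * P"
  shows "E \<le> (1 - lam * \<alpha> / 2) * D"
proof (cases "P \<ge> lam * D")
  case True
  then have "\<alpha> / 2 * (lam * D) \<le> \<alpha> / 2 * P" using assms(3) by (intro mult_left_mono) auto
  then show ?thesis using assms(5) by (simp add: algebra_simps)
next
  case False
  then have "P / lam \<le> D" using assms(2) by (simp add: divide_le_eq mult.commute)
  then have "(1 - lam * \<alpha> / 2) * (P / lam) \<le> (1 - lam * \<alpha> / 2) * D"
    using assms(4) by (intro mult_left_mono) auto
  moreover have "(1 - lam * \<alpha> / 2) * (P / lam) = P / lam - \<alpha> / 2 * P"
    using assms(2) by (simp add: field_simps)
  ultimately show ?thesis using assms(6) by linarith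
qed

theorem lemma2:
  fixes A :: "real^'n^'n" and b xk xstar :: "real^'n" and \<tau> \<alpha> lam L :: real
  assumes spd: "sym_posdef A"
    and lam: "lam \<in> eigenvalues_of A" "\<forall>\<mu>\<in>eigenvalues_of A. lam \<le> \<mu>"
    and Lmax: "L \<in> eigenvalues_of A" "\<forall>\<mu>\<in>eigenvalues_of A. \<mu> \<le> L"
    and lampos: "lam > 0"
    and tau: "\<tau> \<ge> 0"
    and xstar: "\<forall>y. Fobj A b \<tau> xstar \<le> Fobj A b \<tau> y"
    and alpha: "0 < \<alpha>" "\<alpha> \<le> 1 / L"
    and balance: "norm (omega A b \<tau> xk) \<le> norm (psi A b \<tau> \<alpha> xk)"
  shows "Fobj A b \<tau> (xk - \<alpha> *\<^sub>R psi A b \<tau> \<alpha> xk) - Fobj A b \<tau> xstar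
         \<le> (1 - lam * \<alpha> / 2) * (Fobj A b \<tau> xk - Fobj A b \<tau> xstar)"
proof -
  let ?F = "Fobj A b \<tau>" and ?p = "psi A b \<tau> \<alpha> xk" and ?w = "omega A b \<tau> xk"
  have symA: "transpose A = A" using spd by (simp add: sym_posdef_def)
  have "lam \<le> L" using lam(1) Lmax(2) by blast
  with lampos alpha have "L * \<alpha> \<le> 1" by (simp add: field_simps)
  moreover have "lam * \<alpha> \<le> L * \<alpha>" using \<open>lam \<le> L\<close> alpha(1) by (simp add: mult_right_mono)
  ultimately have "lam * \<alpha> \<le> 1" by linarith
  note step = subspace_ista_step_ineq[OF symA lam(2) Lmax(2) tau alpha(1) \<open>L * \<alpha> \<le> 1\<close>, of b xk]
  have "(norm ?w)\<^sup>2 \<le> (norm ?p)\<^sup>2" using balance by (simp add: power_mono)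
  then have "(norm (?p + ?w))\<^sup>2 \<le> 2 * (norm ?p)\<^sup>2"
    using norm_add_Pythagorean[OF orthogonal_psi_omega, of A b \<tau> \<alpha> xk] by linarith
  have "norm (?p + ?w) * norm (xk - xstar) - lam / 2 * (norm (xk - xstar))\<^sup>2
      \<le> (norm (?p + ?w))\<^sup>2 / (2 * lam)"
    by (rule mult_sub_half_square_le[OF lampos])
  also have "\<dots> \<le> 2 * (norm ?p)\<^sup>2 / (2 * lam)"
    using \<open>(norm (?p + ?w))\<^sup>2 \<le> 2 * (norm ?p)\<^sup>2\<close> lampos by (intro divide_right_mono) auto
  also have "\<dots> = (norm ?p)\<^sup>2 / lam" by simp
  finally have "norm (?p + ?w) * norm (xk - xstar) - lam / 2 * (norm (xk - xstar))\<^sup>2 \<le> (norm ?p)\<^sup>2 / lam" .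
  then have "?F (xk - \<alpha> *\<^sub>R ?p) - ?F xstar \<le> (norm ?p)\<^sup>2 / lam - \<alpha> / 2 * (norm ?p)\<^sup>2"
    using step[of xstar] by linarith
  moreover have "?F (xk - \<alpha> *\<^sub>R ?p) - ?F xstar \<le> (?F xk - ?F xstar) - \<alpha> / 2 * (norm ?p)\<^sup>2"
    using step[of xk] by simp
  ultimately show ?thesis
    using xstar lampos alpha(1) \<open>lam * \<alpha> \<le> 1\<close> by (intro linear_rate_of_two_bounds) auto
qed

end
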